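(* Let $G$ and $H$ be finitely generated groups such that $H$ has property $\mathrm{F}_{\mathrm{Cone}}(G)$. Then there are only finitely many conjugacy classes of homomorphisms $H\to G$ (where $\varphi_1,\varphi_2$ are conjugate if there is $g\in G$ with $\varphi_2(h)=g\varphi_1(h)g^{-1}$ for all $h\in H$).
   Context: Fix a word metric $d_S$ on $G$ with respect to a finite generating set $S$. For a non-principal ultrafilter $\omega$ on $\mathbb{N}$, a sequence $\lambda_n\to\infty$ of positive reals and basepoints $\bullet_n\in G$, the asymptotic cone $\mathrm{Cone}_\omega(G,d_S,(\lambda_n),(\bullet_n))$ is the set of sequences $(x_n)$ in $G$ with $\sup_n\frac1{\lambda_n}d_S(x_n,\bullet_n)<\infty$, modulo $\lim_\omega\frac1{\lambda_n}d_S(x_n,y_n)=0$, with metric $\lim_\omega\frac1{\lambda_n}d_S(x_n,y_n)$. Given such a cone and homomorphisms $\varphi_n\colon H\to G$ such that $\sup_n\frac1{\lambda_n}d_S(\varphi_n(h)\bullet_n,\bullet_n)<\infty$ for every $h\in H$, $H$ acts isometrically on the cone by $h\cdot[x_n]=[\varphi_n(h)x_n]$. The group $H$ has property $\mathrm{F}_{\mathrm{Cone}}(G)$ if for every asymptotic cone of $G$ and every such sequence of homomorphisms, the induced action has a fixed point. *)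

theory Defs
  imports "HOL-Algebra.Algebra" "HOL-Analysis.Analysis"
begin

definition fin_gen :: "('a, 'b) monoid_scheme \<Rightarrow> bool" where
  "fin_gen G \<longleftrightarrow> (\<exists>S. finite S \<and> S \<subseteq> carrier G \<and> generate G S = carrier G)"

definition word_len :: "('a, 'b) monoid_scheme \<Rightarrow> 'a set \<Rightarrow> 'a \<Rightarrow> nat" where
  "word_len G S x = (LEAST n. \<exists>ws. length ws = n \<and> set ws \<subseteq> S \<union> (\<lambda>s. inv\<^bsub>G\<^esub> s) ` S
       \<and> foldr (\<lambda>a b. a \<otimes>\<^bsub>G\<^esub> b) ws \<one>\<^bsub>G\<^esub> = x)"

definition word_dist :: "('a, 'b) monoid_scheme \<Rightarrow> 'a set \<Rightarrow> 'a \<Rightarrow> 'a \<Rightarrow> real" where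
  "word_dist G S x y = real (word_len G S (inv\<^bsub>G\<^esub> x \<otimes>\<^bsub>G\<^esub> y))"

definition nonprincipal_ultrafilter :: "nat filter \<Rightarrow> bool" where
  "nonprincipal_ultrafilter \<omega> \<longleftrightarrow> \<omega> \<noteq> bot
     \<and> (\<forall>P. eventually P \<omega> \<or> eventually (\<lambda>n. \<not> P n) \<omega>)
     \<and> (\<forall>k. eventually (\<lambda>n. n \<noteq> k) \<omega>)"

text \<open>A point of the cone is represented by a sequence (x_n) in G with
  sup_n d_S(x_n, b_n)/\<lambda>_n < \<infinity>; two sequences represent the same point iff
  lim_\<omega> d_S(x_n,y_n)/\<lambda>_n = 0.  Hence [x] is a fixed point of the induced action
  iff lim_\<omega> d_S(\<phi>_n(h) x_n, x_n)/\<lambda>_n = 0 for every h in H.\<close>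
definition has_F_Cone ::
  "('a, 'b) monoid_scheme \<Rightarrow> 'a set \<Rightarrow> ('c, 'd) monoid_scheme \<Rightarrow> bool" where
  "has_F_Cone G S H \<longleftrightarrow>
    (\<forall>(\<omega>::nat filter) (lam::nat \<Rightarrow> real) (bp::nat \<Rightarrow> 'a) (\<phi>::nat \<Rightarrow> 'c \<Rightarrow> 'a).
       nonprincipal_ultrafilter \<omega>
       \<and> (\<forall>n. lam n > 0) \<and> filterlim lam at_top sequentially
       \<and> (\<forall>n. bp n \<in> carrier G)
       \<and> (\<forall>n. \<phi> n \<in> hom H G)
       \<and> (\<forall>h\<in>carrier H. bdd_above (range (\<lambda>n. word_dist G S (\<phi> n h \<otimes>\<^bsub>G\<^esub> bp n) (bp n) / lam n)))
     \<longrightarrow> (\<exists>x::nat \<Rightarrow> 'a. (\<forall>n. x n \<in> carrier G)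
            \<and> bdd_above (range (\<lambda>n. word_dist G S (x n) (bp n) / lam n))
            \<and> (\<forall>h\<in>carrier H.
                 ((\<lambda>n. word_dist G S (\<phi> n h \<otimes>\<^bsub>G\<^esub> x n) (x n) / lam n) \<longlongrightarrow> 0) \<omega>)))"

definition hom_conj_rel ::
  "('c, 'd) monoid_scheme \<Rightarrow> ('a, 'b) monoid_scheme \<Rightarrow> (('c \<Rightarrow> 'a) \<times> ('c \<Rightarrow> 'a)) set" where
  "hom_conj_rel H G = {(\<phi>1, \<phi>2). \<phi>1 \<in> hom H G \<and> \<phi>2 \<in> hom H G \<and>
      (\<exists>g\<in>carrier G. \<forall>h\<in>carrier H. \<phi>2 h = g \<otimes>\<^bsub>G\<^esub> \<phi>1 h \<otimes>\<^bsub>G\<^esub> inv\<^bsub>G\<^esub> g)}"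

end

theory Submission
  imports Defs
begin

text \<open>
  For a homomorphism \<open>\<phi>\<close> and a point \<open>x\<close> of \<open>G\<close>, the displacement of \<open>x\<close> is the largest
  distance \<open>d\<^sub>S(\<phi>(t)x, x)\<close> over a finite generating set \<open>T\<close> of \<open>H\<close>. Conjugating \<open>\<phi>\<close> moves
  the point, so within a conjugacy class the displacement at \<open>1\<close> takes every value attained
  anywhere; and only finitely many classes contain a homomorphism of displacement at most \<open>n\<close>
  at \<open>1\<close>, since such a homomorphism sends each generator into a ball of radius \<open>n\<close>.
  If there were infinitely many classes, we could pick homomorphisms \<open>\<phi>\<^sub>n\<close> whose minimal
  displacement \<open>\<lambda>\<^sub>n\<close>, attained at \<open>b\<^sub>n\<close>, exceeds \<open>n\<close>. Rescaling by \<open>\<lambda>\<^sub>n\<close> gives an action on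
  an asymptotic cone with base points \<open>b\<^sub>n\<close>, whose fixed point \<open>[x\<^sub>n]\<close> would have displacement
  \<open>o(\<lambda>\<^sub>n)\<close> along the ultrafilter, contradicting minimality of \<open>\<lambda>\<^sub>n\<close>.
\<close>

lemma ex_ultrafilter_le:
  fixes F :: "'a filter"
  assumes "F \<noteq> bot"
  shows "\<exists>U. U \<noteq> bot \<and> U \<le> F \<and> (\<forall>P. eventually P U \<or> eventually (\<lambda>x. \<not> P x) U)"
proof -
  let ?A = "{U. U \<noteq> bot \<and> U \<le> F}"
  have po: "partial_order_on ?A (relation_of (\<ge>) ?A)"
    by (rule partial_order_on_relation_ofI) auto
  have "\<exists>L\<in>?A. \<forall>U\<in>C. L \<le> U" if "C \<in> Chains (relation_of (\<ge>) ?A)" for C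
  proof (cases "C = {}")
    case True
    with assms show ?thesis by blast
  next
    case False
    from that have C: "C \<subseteq> ?A" "\<And>U V. U \<in> C \<Longrightarrow> V \<in> C \<Longrightarrow> U \<le> V \<or> V \<le> U"
      by (auto simp: Chains_def relation_of_def)
    have "Inf C \<noteq> bot"
      unfolding trivial_limit_def
      using C False by (subst eventually_Inf_base) (auto simp: trivial_limit_def)
    moreover from False C obtain U where "U \<in> C" "Inf C \<le> U" "U \<le> F"
      by (auto intro: Inf_lower)
    ultimately show ?thesis by (auto intro: Inf_lower)
  qed
  from predicate_Zorn[OF po this] obtain U where U: "U \<in> ?A"
    and maximal: "\<And>V. V \<in> ?A \<Longrightarrow> V \<le> U \<Longrightarrow> V = U"
    by auto
  have "eventually P U" if "\<not> eventually (\<lambda>x. \<not> P x) U" for P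
  proof -
    \<comment> \<open>Otherwise restricting \<open>U\<close> to \<open>{x. P x}\<close> would give a strictly finer proper filter.\<close>
    have "inf U (principal {x. P x}) \<noteq> bot"
      using that by (simp add: trivial_limit_def eventually_inf_principal not_eventually)
    with U have "inf U (principal {x. P x}) = U"
      by (intro maximal) (auto intro: le_infI1)
    moreover have "eventually P (inf U (principal {x. P x}))"
      by (simp add: eventually_inf_principal)
    ultimately show ?thesis
      by simp
  qed
  with U show ?thesis by blast
qed

lemma ex_nonprincipal_ultrafilter: "\<exists>\<omega>. nonprincipal_ultrafilter \<omega>"
proof -
  obtain U :: "nat filter" where U: "U \<noteq> bot" "U \<le> cofinite"
    and ultra: "\<forall>P. eventually P U \<or> eventually (\<lambda>x. \<not> P x) U"
    using ex_ultrafilter_le[of cofinite] by auto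
  have "eventually (\<lambda>n. n \<noteq> k) U" for k
    using U(2) by (rule filter_leD) (simp add: eventually_cofinite)
  with U ultra show ?thesis
    unfolding nonprincipal_ultrafilter_def by blast
qed

lemma (in group) inv_mult_cancel_left: "x \<in> carrier G \<Longrightarrow> y \<in> carrier G \<Longrightarrow> inv x \<otimes> (x \<otimes> y) = y"
  by (simp add: m_assoc[symmetric])

lemma (in group) mult_inv_cancel_left: "x \<in> carrier G \<Longrightarrow> y \<in> carrier G \<Longrightarrow> x \<otimes> (inv x \<otimes> y) = y"
  by (simp add: m_assoc[symmetric])

locale word_metric = group G for G (structure) +
  fixes S :: "'a set"
  assumes gens_closed: "S \<subseteq> carrier G"
    and gens_generate: "generate G S = carrier G"
begin

definition letters :: "'a set" where
  "letters = S \<union> (\<lambda>s. inv s) ` S"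

abbreviation word_prod :: "'a list \<Rightarrow> 'a" where
  "word_prod ws \<equiv> foldr (\<otimes>) ws \<one>"

lemma letter_closed: "a \<in> letters \<Longrightarrow> a \<in> carrier G"
  using gens_closed by (auto simp: letters_def)

lemma letter_inv: "a \<in> letters \<Longrightarrow> inv a \<in> letters"
  using gens_closed by (auto simp: letters_def)

lemma word_len_eq: "word_len G S x = (LEAST n. \<exists>ws. length ws = n \<and> set ws \<subseteq> letters \<and> word_prod ws = x)"
  by (simp add: word_len_def letters_def)

lemma word_prod_closed: "set ws \<subseteq> letters \<Longrightarrow> word_prod ws \<in> carrier G"
  by (induction ws) (simp_all add: letter_closed)

lemma word_prod_append:
  "set xs \<subseteq> letters \<Longrightarrow> set ys \<subseteq> letters \<Longrightarrow> word_prod (xs @ ys) = word_prod xs \<otimes> word_prod ys"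
  by (induction xs) (simp_all add: m_assoc letter_closed word_prod_closed)

lemma word_prod_rev_inv:
  "set ws \<subseteq> letters \<Longrightarrow> word_prod (rev (map (\<lambda>a. inv a) ws)) = inv (word_prod ws)"
proof (induction ws)
  case (Cons a ws)
  then have a: "a \<in> carrier G" "inv a \<in> letters" and ws: "set ws \<subseteq> letters"
    by (simp_all add: letter_closed letter_inv)
  have "set (rev (map (\<lambda>a. inv a) ws)) \<subseteq> letters"
    using ws by (auto simp: letter_inv)
  from word_prod_append[OF this, of "[inv a]"] a Cons.IH[OF ws]
  show ?case
    using ws by (simp add: inv_mult_group word_prod_closed)
qed simp

lemma word_exists: "x \<in> carrier G \<Longrightarrow> \<exists>ws. set ws \<subseteq> letters \<and> word_prod ws = x"
  unfolding gens_generate[symmetric]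
proof (induction rule: generate.induct)
  case one
  show ?case by (intro exI[of _ "[]"]) simp
next
  case (incl h)
  with gens_closed show ?case by (intro exI[of _ "[h]"]) (auto simp: letters_def)
next
  case (inv h)
  with gens_closed show ?case by (intro exI[of _ "[inv h]"]) (auto simp: letters_def)
next
  case (eng h1 h2)
  then obtain w1 w2 where "set w1 \<subseteq> letters" "word_prod w1 = h1" "set w2 \<subseteq> letters" "word_prod w2 = h2"
    by blast
  then show ?case by (metis word_prod_append set_append Un_subset_iff)
qed

lemma word_len_le: "set ws \<subseteq> letters \<Longrightarrow> word_prod ws = x \<Longrightarrow> word_len G S x \<le> length ws"
  unfolding word_len_eq by (rule Least_le) blast

lemma shortest_word:
  assumes "x \<in> carrier G"
  obtains ws where "length ws = word_len G S x" "set ws \<subseteq> letters" "word_prod ws = x"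
proof -
  from word_exists[OF assms] have "\<exists>n ws. length ws = n \<and> set ws \<subseteq> letters \<and> word_prod ws = x"
    by blast
  from LeastI_ex[OF this] that show thesis
    unfolding word_len_eq by blast
qed

lemma word_len_one: "word_len G S \<one> = 0"
  using word_len_le[of "[]"] by simp

lemma word_len_mult:
  assumes "x \<in> carrier G" "y \<in> carrier G"
  shows "word_len G S (x \<otimes> y) \<le> word_len G S x + word_len G S y"
proof -
  obtain u where u: "length u = word_len G S x" "set u \<subseteq> letters" "word_prod u = x"
    by (rule shortest_word[OF assms(1)])
  obtain v where v: "length v = word_len G S y" "set v \<subseteq> letters" "word_prod v = y"
    by (rule shortest_word[OF assms(2)])
  have "set (u @ v) \<subseteq> letters" "word_prod (u @ v) = x \<otimes> y"
    using u v by (simp_all only: word_prod_append set_append Un_subset_iff simp_thms)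
  from word_len_le[OF this] show ?thesis
    by (simp add: u(1) v(1))
qed

lemma word_len_inv_le:
  assumes "x \<in> carrier G"
  shows "word_len G S (inv x) \<le> word_len G S x"
proof -
  obtain ws where len: "length ws = word_len G S x" and ws: "set ws \<subseteq> letters" "word_prod ws = x"
    by (rule shortest_word[OF assms])
  have "set (rev (map (\<lambda>a. inv a) ws)) \<subseteq> letters"
    using ws(1) by (auto simp: letter_inv)
  from word_len_le[OF this word_prod_rev_inv[OF ws(1)]]
  show ?thesis
    by (simp only: ws(2) len length_rev length_map)
qed

lemma word_len_inv: "x \<in> carrier G \<Longrightarrow> word_len G S (inv x) = word_len G S x"
  using word_len_inv_le[of x] word_len_inv_le[of "inv x"] by simp

lemma finite_word_len_le:
  assumes "finite S"
  shows "finite {x \<in> carrier G. word_len G S x \<le> n}"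
proof -
  have "{x \<in> carrier G. word_len G S x \<le> n} \<subseteq> word_prod ` {ws. set ws \<subseteq> letters \<and> length ws \<le> n}"
  proof
    fix x
    assume x: "x \<in> {x \<in> carrier G. word_len G S x \<le> n}"
    then have "x \<in> carrier G" by simp
    then obtain ws where "length ws = word_len G S x" "set ws \<subseteq> letters" "word_prod ws = x"
      by (rule shortest_word)
    with x show "x \<in> word_prod ` {ws. set ws \<subseteq> letters \<and> length ws \<le> n}"
      by force
  qed
  moreover have "finite {ws. set ws \<subseteq> letters \<and> length ws \<le> n}"
    using assms by (intro finite_lists_length_le) (simp add: letters_def)
  ultimately show ?thesis
    using finite_subset by blast
qed

definition move_dist :: "'a \<Rightarrow> 'a \<Rightarrow> nat" where
  "move_dist g x = word_len G S (inv (g \<otimes> x) \<otimes> x)"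

lemma word_dist_eq_move_dist: "word_dist G S (g \<otimes> x) x = real (move_dist g x)"
  by (simp add: word_dist_def move_dist_def)

lemma move_dist_conv:
  "g \<in> carrier G \<Longrightarrow> x \<in> carrier G \<Longrightarrow> move_dist g x = word_len G S (inv x \<otimes> inv g \<otimes> x)"
  by (simp add: move_dist_def inv_mult_group m_assoc)

lemma move_dist_at_one: "g \<in> carrier G \<Longrightarrow> move_dist g \<one> = word_len G S g"
  by (simp add: move_dist_conv word_len_inv)

lemma move_dist_one: "x \<in> carrier G \<Longrightarrow> move_dist \<one> x = 0"
  by (simp add: move_dist_conv word_len_one)

lemma move_dist_inv:
  assumes "g \<in> carrier G" "x \<in> carrier G"
  shows "move_dist (inv g) x = move_dist g x"
proof -
  have "inv x \<otimes> inv (inv g) \<otimes> x = inv (inv x \<otimes> inv g \<otimes> x)"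
    using assms by (simp add: inv_mult_group m_assoc)
  then show ?thesis
    using assms by (simp add: move_dist_conv word_len_inv)
qed

lemma move_dist_mult:
  assumes "g \<in> carrier G" "h \<in> carrier G" "x \<in> carrier G"
  shows "move_dist (g \<otimes> h) x \<le> move_dist g x + move_dist h x"
proof -
  have "inv x \<otimes> inv (g \<otimes> h) \<otimes> x = (inv x \<otimes> inv h \<otimes> x) \<otimes> (inv x \<otimes> inv g \<otimes> x)"
    using assms by (simp add: inv_mult_group m_assoc mult_inv_cancel_left)
  then show ?thesis
    using assms word_len_mult[of "inv x \<otimes> inv h \<otimes> x" "inv x \<otimes> inv g \<otimes> x"]
    by (simp add: move_dist_conv)
qed

lemma move_dist_conj:
  assumes "g \<in> carrier G" "y \<in> carrier G"
  shows "move_dist (inv y \<otimes> g \<otimes> y) \<one> = move_dist g y"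
  using assms by (simp add: move_dist_conv inv_mult_group m_assoc)

end

lemma (in group) hom_conj:
  assumes "\<phi> \<in> hom H G" "g \<in> carrier G"
  shows "(\<lambda>h. g \<otimes> \<phi> h \<otimes> inv g) \<in> hom H G"
proof -
  have "g \<otimes> (a \<otimes> b) \<otimes> inv g = (g \<otimes> a \<otimes> inv g) \<otimes> (g \<otimes> b \<otimes> inv g)"
    if "a \<in> carrier G" "b \<in> carrier G" for a b
    using that assms(2) by (simp add: m_assoc inv_mult_cancel_left)
  with assms show ?thesis
    by (auto simp: hom_def Pi_iff)
qed

lemma (in group) equiv_hom_conj_rel: "equiv (hom H G) (hom_conj_rel H G)"
proof (rule equivI)
  have closed: "\<phi> h \<in> carrier G" if "\<phi> \<in> hom H G" "h \<in> carrier H" for \<phi> h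
    using that by (auto simp: hom_def)
  show "refl_on (hom H G) (hom_conj_rel H G)"
    by (auto simp: refl_on_def hom_conj_rel_def closed intro!: bexI[of _ \<one>])
  show "sym (hom_conj_rel H G)"
  proof (rule symI)
    fix \<phi> \<psi>
    assume "(\<phi>, \<psi>) \<in> hom_conj_rel H G"
    then obtain g where "\<phi> \<in> hom H G" "\<psi> \<in> hom H G" "g \<in> carrier G"
      and "\<forall>h\<in>carrier H. \<psi> h = g \<otimes> \<phi> h \<otimes> inv g"
      by (auto simp: hom_conj_rel_def)
    then show "(\<psi>, \<phi>) \<in> hom_conj_rel H G"
      by (auto simp: hom_conj_rel_def closed m_assoc inv_mult_cancel_left intro!: bexI[of _ "inv g"])
  qed
  show "trans (hom_conj_rel H G)"
  proof (rule transI)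
    fix \<phi>1 \<phi>2 \<phi>3
    assume "(\<phi>1, \<phi>2) \<in> hom_conj_rel H G" "(\<phi>2, \<phi>3) \<in> hom_conj_rel H G"
    then obtain g g' where "\<phi>1 \<in> hom H G" "\<phi>3 \<in> hom H G" "g \<in> carrier G" "g' \<in> carrier G"
      and "\<forall>h\<in>carrier H. \<phi>2 h = g \<otimes> \<phi>1 h \<otimes> inv g" "\<forall>h\<in>carrier H. \<phi>3 h = g' \<otimes> \<phi>2 h \<otimes> inv g'"
      by (auto simp: hom_conj_rel_def)
    then show "(\<phi>1, \<phi>3) \<in> hom_conj_rel H G"
      by (auto simp: hom_conj_rel_def closed m_assoc inv_mult_group intro!: bexI[of _ "g' \<otimes> g"])
  qed
qed (auto simp: hom_conj_rel_def)

lemma hom_eq_on_generate: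
  assumes "group H" "group G" "\<phi> \<in> hom H G" "\<psi> \<in> hom H G" "T \<subseteq> carrier H"
    and "\<forall>t\<in>T. \<phi> t = \<psi> t" "h \<in> generate H T"
  shows "\<phi> h = \<psi> h"
proof -
  interpret \<phi>: group_hom H G \<phi> using assms by (simp add: group_hom_def group_hom_axioms_def)
  interpret \<psi>: group_hom H G \<psi> using assms by (simp add: group_hom_def group_hom_axioms_def)
  from assms(7) show ?thesis
  proof (induction rule: generate.induct)
    case (inv t)
    with assms(5,6) show ?case by auto
  next
    case (eng h1 h2)
    then have "h1 \<in> carrier H" "h2 \<in> carrier H"
      using \<phi>.G.generate_in_carrier[OF assms(5)] by auto
    with eng show ?case by simp
  qed (use assms(6) in auto)
qed

lemma quotient_eq_Image_member:
  assumes "equiv A r" "D \<in> A // r" "x \<in> D"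
  shows "x \<in> A" "D = r `` {x}"
proof -
  from assms(2) obtain a where a: "D = r `` {a}" "a \<in> A"
    by (rule quotientE)
  with assms(3) have "(a, x) \<in> r" by simp
  then show "x \<in> A" "D = r `` {x}"
    using a equiv_class_eq[OF assms(1)] equiv_type[OF assms(1)] by auto
qed

locale hom_displacement = word_metric G S + H: group H
  for G :: "('a, 'b) monoid_scheme" (structure) and S and H :: "('c, 'd) monoid_scheme" +
  fixes T :: "'c set"
  assumes T_finite: "finite T" and T_carrier: "T \<subseteq> carrier H"
    and T_generate: "generate H T = carrier H"
begin

text \<open>The \<open>0\<close> only makes \<open>Max\<close> meaningful when \<open>T\<close> is empty.\<close>

definition displacement :: "('c \<Rightarrow> 'a) \<Rightarrow> 'a \<Rightarrow> nat" where
  "displacement \<phi> x = Max (insert 0 ((\<lambda>t. move_dist (\<phi> t) x) ` T))"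

lemma move_dist_le_displacement: "t \<in> T \<Longrightarrow> move_dist (\<phi> t) x \<le> displacement \<phi> x"
  unfolding displacement_def using T_finite by (intro Max_ge) auto

lemma displacement_attained:
  assumes "0 < displacement \<phi> x"
  obtains t where "t \<in> T" "move_dist (\<phi> t) x = displacement \<phi> x"
proof -
  have "displacement \<phi> x \<in> insert 0 ((\<lambda>t. move_dist (\<phi> t) x) ` T)"
    unfolding displacement_def using T_finite by (intro Max_in) auto
  with assms that show thesis by auto
qed

lemma displacement_conj:
  assumes "\<phi> \<in> hom H G" "y \<in> carrier G"
  shows "displacement (\<lambda>h. inv y \<otimes> \<phi> h \<otimes> y) \<one> = displacement \<phi> y"
proof -
  have "move_dist (inv y \<otimes> \<phi> t \<otimes> y) \<one> = move_dist (\<phi> t) y" if "t \<in> T" for t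
    using that T_carrier assms by (intro move_dist_conj) (auto simp: hom_def)
  then show ?thesis
    unfolding displacement_def by (metis (no_types, lifting) image_cong)
qed

lemma move_dist_bounded_by_displacement:
  assumes "h \<in> carrier H"
  shows "\<exists>k. \<forall>\<phi>\<in>hom H G. \<forall>x\<in>carrier G. move_dist (\<phi> h) x \<le> k * displacement \<phi> x"
  using assms unfolding T_generate[symmetric]
proof (induction rule: generate.induct)
  case one
  have "move_dist (\<phi> \<one>\<^bsub>H\<^esub>) x = 0" if "\<phi> \<in> hom H G" "x \<in> carrier G" for \<phi> x
  proof -
    interpret group_hom H G \<phi>
      using that H.group_axioms group_axioms by (simp add: group_hom_def group_hom_axioms_def)
    show ?thesis
      using that by (simp add: move_dist_one)
  qed
  then show ?case by simp
next
  case (incl t)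
  then have "\<forall>\<phi>\<in>hom H G. \<forall>x\<in>carrier G. move_dist (\<phi> t) x \<le> 1 * displacement \<phi> x"
    by (simp add: move_dist_le_displacement)
  then show ?case ..
next
  case (inv t)
  have "move_dist (\<phi> (inv\<^bsub>H\<^esub> t)) x = move_dist (\<phi> t) x" if "\<phi> \<in> hom H G" "x \<in> carrier G" for \<phi> x
  proof -
    interpret group_hom H G \<phi>
      using that H.group_axioms group_axioms by (simp add: group_hom_def group_hom_axioms_def)
    show ?thesis
      using inv T_carrier that by (auto simp: move_dist_inv)
  qed
  moreover have "\<forall>\<phi>\<in>hom H G. \<forall>x\<in>carrier G. move_dist (\<phi> t) x \<le> 1 * displacement \<phi> x"
    using inv by (simp add: move_dist_le_displacement)
  ultimately have "\<forall>\<phi>\<in>hom H G. \<forall>x\<in>carrier G. move_dist (\<phi> (inv\<^bsub>H\<^esub> t)) x \<le> 1 * displacement \<phi> x"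
    by simp
  then show ?case ..
next
  case (eng h1 h2)
  obtain k1 k2 where
    k1: "\<forall>\<phi>\<in>hom H G. \<forall>x\<in>carrier G. move_dist (\<phi> h1) x \<le> k1 * displacement \<phi> x" and
    k2: "\<forall>\<phi>\<in>hom H G. \<forall>x\<in>carrier G. move_dist (\<phi> h2) x \<le> k2 * displacement \<phi> x"
    using eng.IH by blast
  have h: "h1 \<in> carrier H" "h2 \<in> carrier H"
    using eng.hyps H.generate_in_carrier[OF T_carrier] by auto
  have "move_dist (\<phi> (h1 \<otimes>\<^bsub>H\<^esub> h2)) x \<le> (k1 + k2) * displacement \<phi> x"
    if "\<phi> \<in> hom H G" "x \<in> carrier G" for \<phi> x
  proof -
    have "move_dist (\<phi> (h1 \<otimes>\<^bsub>H\<^esub> h2)) x \<le> move_dist (\<phi> h1) x + move_dist (\<phi> h2) x"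
      using that h move_dist_mult by (auto simp: hom_def)
    with k1 k2 that show ?thesis
      by (fastforce simp: add_mult_distrib)
  qed
  then show ?case by blast
qed

lemma finite_conj_classes_displacement_le:
  assumes "finite S"
  shows "finite {D \<in> hom H G // hom_conj_rel H G. \<exists>\<phi>\<in>D. displacement \<phi> \<one> \<le> n}"
proof -
  let ?r = "hom_conj_rel H G"
  let ?X = "{\<phi> \<in> hom H G. displacement \<phi> \<one> \<le> n}"
  let ?R = "\<lambda>\<phi>. restrict \<phi> T"
  have "?R ` ?X \<subseteq> PiE T (\<lambda>_. {g \<in> carrier G. word_len G S g \<le> n})"
  proof
    fix f
    assume "f \<in> ?R ` ?X"
    then obtain \<phi> where \<phi>: "\<phi> \<in> hom H G" "displacement \<phi> \<one> \<le> n" "f = ?R \<phi>"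
      by auto
    have "\<phi> t \<in> carrier G \<and> word_len G S (\<phi> t) \<le> n" if "t \<in> T" for t
    proof -
      have "\<phi> t \<in> carrier G"
        using that T_carrier \<phi>(1) by (auto simp: hom_def)
      moreover have "move_dist (\<phi> t) \<one> \<le> n"
        using move_dist_le_displacement[OF that, of \<phi> \<one>] \<phi>(2) by simp
      ultimately show ?thesis
        by (simp add: move_dist_at_one)
    qed
    with \<phi>(3) show "f \<in> PiE T (\<lambda>_. {g \<in> carrier G. word_len G S g \<le> n})"
      by (simp add: PiE_iff)
  qed
  then have finite_restrictions: "finite (?R ` ?X)"
    by (rule finite_subset) (intro finite_PiE T_finite finite_word_len_le assms)
  have same_class: "?r `` {\<phi>} = ?r `` {\<psi>}"
    if "\<phi> \<in> hom H G" "\<psi> \<in> hom H G" "?R \<phi> = ?R \<psi>" for \<phi> \<psi>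
  proof -
    have "\<forall>t\<in>T. \<phi> t = \<psi> t"
    proof
      fix t
      assume "t \<in> T"
      with fun_cong[OF that(3), of t] show "\<phi> t = \<psi> t" by simp
    qed
    then have "\<psi> h = \<one> \<otimes> \<phi> h \<otimes> inv \<one>" if "h \<in> carrier H" for h
      using hom_eq_on_generate[OF H.group_axioms group_axioms \<open>\<phi> \<in> hom H G\<close> \<open>\<psi> \<in> hom H G\<close> T_carrier]
        \<open>\<phi> \<in> hom H G\<close> that
      by (simp add: T_generate hom_def Pi_iff)
    with that(1,2) have "(\<phi>, \<psi>) \<in> ?r"
      unfolding hom_conj_rel_def by blast
    then show ?thesis
      by (rule equiv_class_eq[OF equiv_hom_conj_rel])
  qed
  define rep where "rep f = inv_into ?X ?R f" for f
  have "{D \<in> hom H G // ?r. \<exists>\<phi>\<in>D. displacement \<phi> \<one> \<le> n} \<subseteq> (\<lambda>f. ?r `` {rep f}) ` (?R ` ?X)"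
  proof
    fix D
    assume "D \<in> {D \<in> hom H G // ?r. \<exists>\<phi>\<in>D. displacement \<phi> \<one> \<le> n}"
    then obtain \<phi> where D: "D \<in> hom H G // ?r" "\<phi> \<in> D" "displacement \<phi> \<one> \<le> n"
      by blast
    note \<phi> = quotient_eq_Image_member[OF equiv_hom_conj_rel D(1,2)]
    with D(3) have "\<phi> \<in> ?X" by simp
    then have img: "?R \<phi> \<in> ?R ` ?X"
      by (rule imageI)
    have "rep (?R \<phi>) \<in> ?X"
      unfolding rep_def using img by (rule inv_into_into)
    moreover have "?R (rep (?R \<phi>)) = ?R \<phi>"
      unfolding rep_def using img by (rule f_inv_into_f)
    ultimately have "D = ?r `` {rep (?R \<phi>)}"
      using same_class[of "rep (?R \<phi>)" \<phi>] \<phi> by simp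
    then show "D \<in> (\<lambda>f. ?r `` {rep f}) ` (?R ` ?X)"
      by (rule rev_image_eqI[OF img])
  qed
  then show ?thesis
    by (rule finite_subset[OF _ finite_imageI[OF finite_restrictions]])
qed

lemma conj_class_displacement_at_one:
  assumes "\<phi> \<in> hom H G" "x \<in> carrier G"
  shows "\<exists>\<psi>\<in>hom_conj_rel H G `` {\<phi>}. displacement \<psi> \<one> = displacement \<phi> x"
proof
  let ?\<psi> = "\<lambda>h. inv x \<otimes> \<phi> h \<otimes> x"
  have "?\<psi> \<in> hom H G"
    using hom_conj[OF assms(1) inv_closed[OF assms(2)]] assms(2) by simp
  with assms show "?\<psi> \<in> hom_conj_rel H G `` {\<phi>}"
    by (auto simp: hom_conj_rel_def intro!: bexI[of _ "inv x"])
  show "displacement ?\<psi> \<one> = displacement \<phi> x"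
    by (rule displacement_conj[OF assms])
qed

lemma rescaled_move_dist_bdd_above:
  assumes h: "h \<in> carrier H" and \<phi>: "\<And>n. \<phi> n \<in> hom H G" and bp: "\<And>n. bp n \<in> carrier G"
    and pos: "\<And>n. 0 < displacement (\<phi> n) (bp n)"
  shows "bdd_above (range (\<lambda>n. word_dist G S (\<phi> n h \<otimes> bp n) (bp n) / real (displacement (\<phi> n) (bp n))))"
proof -
  obtain k where k: "\<forall>\<psi>\<in>hom H G. \<forall>x\<in>carrier G. move_dist (\<psi> h) x \<le> k * displacement \<psi> x"
    using move_dist_bounded_by_displacement[OF h] by blast
  have "word_dist G S (\<phi> n h \<otimes> bp n) (bp n) / real (displacement (\<phi> n) (bp n)) \<le> real k" for n
  proof -
    have "move_dist (\<phi> n h) (bp n) \<le> k * displacement (\<phi> n) (bp n)"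
      using k \<phi> bp by blast
    then have "word_dist G S (\<phi> n h \<otimes> bp n) (bp n) \<le> real k * real (displacement (\<phi> n) (bp n))"
      unfolding word_dist_eq_move_dist by (metis of_nat_mono of_nat_mult)
    with pos[of n] show ?thesis
      by (simp add: pos_divide_le_eq)
  qed
  then show ?thesis
    by (intro bdd_aboveI2)
qed

lemma generator_moves_by_minimal_displacement:
  assumes x: "x \<in> carrier G"
    and minimal: "\<And>y. y \<in> carrier G \<Longrightarrow> displacement \<phi> b \<le> displacement \<phi> y"
    and pos: "0 < displacement \<phi> b"
  shows "\<exists>t\<in>T. 1 \<le> word_dist G S (\<phi> t \<otimes> x) x / real (displacement \<phi> b)"
proof -
  have "0 < displacement \<phi> x"
    using minimal[OF x] pos by linarith
  then obtain t where "t \<in> T" "move_dist (\<phi> t) x = displacement \<phi> x"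
    by (rule displacement_attained)
  with minimal[OF x] have "real (displacement \<phi> b) \<le> word_dist G S (\<phi> t \<otimes> x) x"
    by (simp add: word_dist_eq_move_dist)
  with \<open>t \<in> T\<close> pos show ?thesis
    by auto
qed

lemma F_Cone_minimal_displacement_bounded:
  assumes F_Cone: "has_F_Cone G S H"
    and \<phi>: "\<And>n. \<phi> n \<in> hom H G" and bp: "\<And>n. bp n \<in> carrier G"
    and minimal: "\<And>n x. x \<in> carrier G \<Longrightarrow> displacement (\<phi> n) (bp n) \<le> displacement (\<phi> n) x"
    and large: "\<And>n. n < displacement (\<phi> n) (bp n)"
  shows False
proof -
  define lam where "lam n = real (displacement (\<phi> n) (bp n))" for n
  have pos: "\<And>n. 0 < displacement (\<phi> n) (bp n)"
    using large by (metis gr_zeroI less_nat_zero_code)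
  then have lam_pos: "\<forall>n. lam n > 0"
    by (simp add: lam_def)
  have lam_top: "filterlim lam at_top sequentially"
    by (rule filterlim_at_top_mono[OF filterlim_real_sequentially])
      (use large in \<open>auto simp: lam_def less_imp_le\<close>)
  have bounded: "\<forall>h\<in>carrier H. bdd_above (range (\<lambda>n. word_dist G S (\<phi> n h \<otimes> bp n) (bp n) / lam n))"
  proof
    fix h
    assume "h \<in> carrier H"
    from rescaled_move_dist_bdd_above[OF this \<phi> bp pos]
    show "bdd_above (range (\<lambda>n. word_dist G S (\<phi> n h \<otimes> bp n) (bp n) / lam n))"
      by (simp only: lam_def)
  qed
  obtain \<omega> where \<omega>: "nonprincipal_ultrafilter \<omega>"
    using ex_nonprincipal_ultrafilter by blast
  with \<phi> bp lam_pos lam_top bounded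
  have "nonprincipal_ultrafilter \<omega> \<and> (\<forall>n. lam n > 0) \<and> filterlim lam at_top sequentially
      \<and> (\<forall>n. bp n \<in> carrier G) \<and> (\<forall>n. \<phi> n \<in> hom H G)
      \<and> (\<forall>h\<in>carrier H. bdd_above (range (\<lambda>n. word_dist G S (\<phi> n h \<otimes> bp n) (bp n) / lam n)))"
    by blast
  from F_Cone[unfolded has_F_Cone_def, rule_format, OF this]
  obtain x where x: "\<And>n. x n \<in> carrier G"
    and fixed: "\<forall>h\<in>carrier H. ((\<lambda>n. word_dist G S (\<phi> n h \<otimes> x n) (x n) / lam n) \<longlongrightarrow> 0) \<omega>"
    by blast
  have "\<forall>t\<in>T. eventually (\<lambda>n. word_dist G S (\<phi> n t \<otimes> x n) (x n) / lam n < 1) \<omega>"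
  proof
    fix t
    assume "t \<in> T"
    with fixed T_carrier have "((\<lambda>n. word_dist G S (\<phi> n t \<otimes> x n) (x n) / lam n) \<longlongrightarrow> 0) \<omega>"
      by blast
    then show "eventually (\<lambda>n. word_dist G S (\<phi> n t \<otimes> x n) (x n) / lam n < 1) \<omega>"
      by (rule order_tendstoD(2)) simp
  qed
  then have "eventually (\<lambda>n. \<forall>t\<in>T. word_dist G S (\<phi> n t \<otimes> x n) (x n) / lam n < 1) \<omega>"
    by (rule eventually_ball_finite[OF T_finite])
  moreover have "\<exists>t\<in>T. 1 \<le> word_dist G S (\<phi> n t \<otimes> x n) (x n) / lam n" for n
    unfolding lam_def by (rule generator_moves_by_minimal_displacement[OF x minimal pos])
  ultimately have "eventually (\<lambda>n. False) \<omega>"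
    by (elim eventually_mono) (meson not_less)
  with \<omega> show False
    by (simp add: nonprincipal_ultrafilter_def)
qed

lemma F_Cone_displacement_bounded:
  assumes "has_F_Cone G S H"
  shows "\<exists>B. \<forall>\<phi>\<in>hom H G. \<exists>x\<in>carrier G. displacement \<phi> x \<le> B"
proof (rule ccontr)
  assume "\<not> ?thesis"
  then have "\<forall>n. \<exists>\<phi>\<in>hom H G. \<forall>x\<in>carrier G. n < displacement \<phi> x"
    by (auto simp: not_le)
  then obtain \<phi> where "\<forall>n. \<phi> n \<in> hom H G \<and> (\<forall>x\<in>carrier G. n < displacement (\<phi> n) x)"
    by (simp only: Bex_def choice_iff) blast
  then have \<phi>: "\<And>n. \<phi> n \<in> hom H G"
    and large: "\<And>n x. x \<in> carrier G \<Longrightarrow> n < displacement (\<phi> n) x"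
    by auto
  define bp where "bp n = arg_min (displacement (\<phi> n)) (\<lambda>x. x \<in> carrier G)" for n
  have bp: "bp n \<in> carrier G" for n
    unfolding bp_def by (rule arg_min_natI) (rule one_closed)
  have "displacement (\<phi> n) (bp n) \<le> displacement (\<phi> n) x" if "x \<in> carrier G" for n x
    unfolding bp_def using that by (rule arg_min_nat_le)
  from assms \<phi> bp this large[OF bp] show False
    by (rule F_Cone_minimal_displacement_bounded)
qed

lemma finite_conj_classes_if_displacement_bounded:
  assumes "finite S" and bounded: "\<forall>\<phi>\<in>hom H G. \<exists>x\<in>carrier G. displacement \<phi> x \<le> B"
  shows "finite (hom H G // hom_conj_rel H G)"
proof -
  have "hom H G // hom_conj_rel H G
      \<subseteq> {D \<in> hom H G // hom_conj_rel H G. \<exists>\<phi>\<in>D. displacement \<phi> \<one> \<le> B}"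
  proof (safe elim!: quotientE)
    fix \<phi>
    assume "\<phi> \<in> hom H G"
    with bounded obtain x where x: "x \<in> carrier G" "displacement \<phi> x \<le> B"
      by blast
    with \<open>\<phi> \<in> hom H G\<close> obtain \<psi> where
      "\<psi> \<in> hom_conj_rel H G `` {\<phi>}" "displacement \<psi> \<one> = displacement \<phi> x"
      using conj_class_displacement_at_one by blast
    with x(2) show "\<exists>\<psi>\<in>hom_conj_rel H G `` {\<phi>}. displacement \<psi> \<one> \<le> B"
      by (metis order.refl)
  qed (auto intro: quotientI)
  then show ?thesis
    by (rule finite_subset) (rule finite_conj_classes_displacement_le[OF \<open>finite S\<close>])
qed

end

theorem proposition5p4:
  fixes G :: "('a, 'b) monoid_scheme" and H :: "('c, 'd) monoid_scheme" and S :: "'a set"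
  assumes "group G" and "group H"
    and "finite S" and "S \<subseteq> carrier G" and "generate G S = carrier G"
    and "fin_gen H"
    and "has_F_Cone G S H"
  shows "finite (hom H G // hom_conj_rel H G)"
proof -
  obtain T where "finite T" "T \<subseteq> carrier H" "generate H T = carrier H"
    using \<open>fin_gen H\<close> by (auto simp: fin_gen_def)
  with assms interpret hom_displacement G S H T
    by (simp add: hom_displacement_def word_metric_def word_metric_axioms_def hom_displacement_axioms_def)
  from F_Cone_displacement_bounded[OF \<open>has_F_Cone G S H\<close>]
  obtain B where "\<forall>\<phi>\<in>hom H G. \<exists>x\<in>carrier G. displacement \<phi> x \<le> B"
    by blast
  with \<open>finite S\<close> show ?thesis
    by (rule finite_conj_classes_if_displacement_bounded)
qed

end
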